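(* Suppose $|B|>|B|_c$. Then there exists a constant $C>0$ such that for every $v=(v_1,v_2)\in H^1(\Omega;\mathbb{R}^2)$, $\Omega=\mathbb{R}\times(-1,1)$, with $v(x_1,\pm1)=0$, $$\int_\Omega|B|^2|\partial_2v|^2dx-\int_{\mathbb{R}}g[\rho]|v_2(x_1,0)|^2dx_1\ge C^{-1}\big(\|v\|_{L^2}^2+\|\partial_2v\|_{L^2}^2\big).$$
   Context: $g>0$, $[\rho]>0$ constants; $|B|_c^2:=\sup\{g[\rho]\psi(0)^2/\int_{-1}^1|\psi'|^2dx_2: 0\ne\psi\in H_0^1((-1,1))\}$; norms are $L^2(\Omega)$ norms. *)

theory Defs
  imports "HOL-Analysis.Analysis"
begin

definition strip :: "(real \<times> real) set" where
  "strip = {x. -1 < snd x \<and> snd x < 1}"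

definition L2_strip :: "(real \<times> real \<Rightarrow> real \<times> real) \<Rightarrow> bool" where
  "L2_strip f \<longleftrightarrow> set_borel_measurable lborel strip f \<and>
     set_integrable lborel strip (\<lambda>x. (norm (f x))^2)"

definition test_fun_strip ::
  "(real \<times> real \<Rightarrow> real) \<Rightarrow> (real \<times> real \<Rightarrow> real) \<Rightarrow> (real \<times> real \<Rightarrow> real) \<Rightarrow> bool" where
  "test_fun_strip \<phi> \<phi>1 \<phi>2 \<longleftrightarrow>
     (\<forall>x. (\<phi> has_derivative (\<lambda>h. fst h * \<phi>1 x + snd h * \<phi>2 x)) (at x)) \<and>
     continuous_on UNIV \<phi>1 \<and> continuous_on UNIV \<phi>2 \<and>
     compact (closure {x. \<phi> x \<noteq> 0}) \<and> closure {x. \<phi> x \<noteq> 0} \<subseteq> strip"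

definition weak_d1 :: "(real \<times> real \<Rightarrow> real \<times> real) \<Rightarrow> (real \<times> real \<Rightarrow> real \<times> real) \<Rightarrow> bool" where
  "weak_d1 v w \<longleftrightarrow> (\<forall>\<phi> \<phi>1 \<phi>2. test_fun_strip \<phi> \<phi>1 \<phi>2 \<longrightarrow>
     (LINT x:strip|lborel. \<phi>1 x *\<^sub>R v x) = - (LINT x:strip|lborel. \<phi> x *\<^sub>R w x))"

definition weak_d2 :: "(real \<times> real \<Rightarrow> real \<times> real) \<Rightarrow> (real \<times> real \<Rightarrow> real \<times> real) \<Rightarrow> bool" where
  "weak_d2 v w \<longleftrightarrow> (\<forall>\<phi> \<phi>1 \<phi>2. test_fun_strip \<phi> \<phi>1 \<phi>2 \<longrightarrow>
     (LINT x:strip|lborel. \<phi>2 x *\<^sub>R v x) = - (LINT x:strip|lborel. \<phi> x *\<^sub>R w x))"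

text \<open>v in H^1(Omega;R^2) with weak derivatives d1v, d2v, v is (the representative that is)
  continuous in x2 on [-1,1] for a.e. x1, and has zero trace v(x1,+-1)=0.
  For such a representative the trace on {x2 = c} is v(x1,c).\<close>
definition H1_strip_zero_trace ::
  "(real \<times> real \<Rightarrow> real \<times> real) \<Rightarrow> (real \<times> real \<Rightarrow> real \<times> real) \<Rightarrow> (real \<times> real \<Rightarrow> real \<times> real) \<Rightarrow> bool" where
  "H1_strip_zero_trace v d1v d2v \<longleftrightarrow>
     L2_strip v \<and> L2_strip d1v \<and> L2_strip d2v \<and> weak_d1 v d1v \<and> weak_d2 v d2v \<and>
     (AE x1 in lborel. continuous_on {-1..1} (\<lambda>t. v (x1, t)) \<and> v (x1, -1) = 0 \<and> v (x1, 1) = 0)"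

definition test_fun_int :: "(real \<Rightarrow> real) \<Rightarrow> (real \<Rightarrow> real) \<Rightarrow> bool" where
  "test_fun_int \<phi> \<phi>' \<longleftrightarrow> (\<forall>x. (\<phi> has_real_derivative \<phi>' x) (at x)) \<and> continuous_on UNIV \<phi>' \<and>
     compact (closure {x. \<phi> x \<noteq> 0}) \<and> closure {x. \<phi> x \<noteq> 0} \<subseteq> {-1<..<1}"

definition H01_int :: "(real \<Rightarrow> real) \<Rightarrow> (real \<Rightarrow> real) \<Rightarrow> bool" where
  "H01_int \<psi> d\<psi> \<longleftrightarrow>
     set_borel_measurable lborel {-1<..<1} \<psi> \<and> set_integrable lborel {-1<..<1} (\<lambda>t. (\<psi> t)^2) \<and>
     set_borel_measurable lborel {-1<..<1} d\<psi> \<and> set_integrable lborel {-1<..<1} (\<lambda>t. (d\<psi> t)^2) \<and>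
     (\<forall>\<phi> \<phi>'. test_fun_int \<phi> \<phi>' \<longrightarrow>
        (LINT t:{-1<..<1}|lborel. \<phi>' t * \<psi> t) = - (LINT t:{-1<..<1}|lborel. \<phi> t * d\<psi> t)) \<and>
     continuous_on {-1..1} \<psi> \<and> \<psi> (-1) = 0 \<and> \<psi> 1 = 0"

definition Bc_sq :: "real \<Rightarrow> real \<Rightarrow> real" where
  "Bc_sq g rho = Sup {g * rho * (\<psi> 0)^2 / (LINT t:{-1<..<1}|lborel. (d\<psi> t)^2) | \<psi> d\<psi>.
      H01_int \<psi> d\<psi> \<and> (\<exists>t\<in>{-1<..<1}. \<psi> t \<noteq> 0)}"

definition Bc :: "real \<Rightarrow> real \<Rightarrow> real" where
  "Bc g rho = sqrt (Bc_sq g rho)"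

end

theory Submission
  imports Defs
begin

text \<open>For almost every \<open>x\<^sub>1\<close> the slice \<open>u = v (x\<^sub>1, \<cdot>)\<close> is continuous on \<open>[-1, 1]\<close>, vanishes at
  \<open>\<plusminus>1\<close> and has weak derivative \<open>\<partial>\<^sub>2v (x\<^sub>1, \<cdot>)\<close>. From \<open>u b - u a = \<integral>\<^sub>a\<^sup>b u'\<close> and Cauchy-Schwarz,
  \<open>\<bar>u t\<bar>\<^sup>2 \<le> 2 \<integral> \<bar>u'\<bar>\<^sup>2\<close>, and using both halves of the interval, \<open>2 \<bar>u 0\<bar>\<^sup>2 \<le> \<integral> \<bar>u'\<bar>\<^sup>2\<close>. Integrating in
  \<open>x\<^sub>1\<close> gives \<open>\<parallel>v\<parallel>\<^sup>2 \<le> 4 \<parallel>\<partial>\<^sub>2v\<parallel>\<^sup>2\<close> and \<open>\<integral> g[\<rho>] \<bar>v\<^sub>2 (x\<^sub>1, 0)\<bar>\<^sup>2 \<le> g[\<rho>]/2 \<parallel>\<partial>\<^sub>2v\<parallel>\<^sup>2\<close>. The second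
  estimate is sharp, the tent \<open>1 - \<bar>t\<bar>\<close> being extremal, so \<open>|B|\<^sub>c\<^sup>2 = g[\<rho>]/2\<close> and the left-hand side is
  at least \<open>(|B|\<^sup>2 - |B|\<^sub>c\<^sup>2) \<parallel>\<partial>\<^sub>2v\<parallel>\<^sup>2 \<ge> (|B|\<^sup>2 - |B|\<^sub>c\<^sup>2)/5 (\<parallel>v\<parallel>\<^sup>2 + \<parallel>\<partial>\<^sub>2v\<parallel>\<^sup>2)\<close>.

  The slices inherit the weak derivative by testing with products of smooth plateaus in \<open>x\<^sub>1\<close> and
  \<open>x\<^sub>2\<close>: shrinking the plateau in \<open>x\<^sub>1\<close> to an interval shows that the one-dimensional identity,
  integrated over any interval in \<open>x\<^sub>1\<close>, vanishes, hence holds for almost every \<open>x\<^sub>1\<close>. Plateaus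
  in \<open>x\<^sub>2\<close> with rational parameters suffice, so a single null set serves for all of them.\<close>

section \<open>Smooth cutoff functions\<close>

lemma has_real_derivative_at_split:
  assumes "(f has_real_derivative D) (at x within {..x})"
    and "(f has_real_derivative D) (at x within {x..})"
  shows "(f has_real_derivative D) (at x)"
proof -
  have "{..x} \<union> {x..} = UNIV" by auto
  then have "at x = sup (at x within {..x}) (at x within {x..})"
    by (metis at_within_union)
  then have "((\<lambda>y. (f y - f x) / (y - x)) \<longlongrightarrow> D) (at x)"
    using assms by (simp add: has_field_derivative_iff filterlim_sup)
  then show ?thesis
    by (simp add: has_field_derivative_iff)
qed

definition smoothstep :: "real \<Rightarrow> real" where
  "smoothstep s = (if s \<le> 0 then 0 else if 1 \<le> s then 1 else 3 * s^2 - 2 * s^3)"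

definition smoothstep' :: "real \<Rightarrow> real" where
  "smoothstep' s = (if s \<le> 0 \<or> 1 \<le> s then 0 else 6 * s - 6 * s^2)"

lemma smoothstep_eq_0: "s \<le> 0 \<Longrightarrow> smoothstep s = 0"
  and smoothstep_eq_1: "1 \<le> s \<Longrightarrow> smoothstep s = 1"
  and smoothstep'_eq_0: "s \<le> 0 \<or> 1 \<le> s \<Longrightarrow> smoothstep' s = 0"
  by (auto simp: smoothstep_def smoothstep'_def)

lemma smoothstep_has_real_derivative: "(smoothstep has_real_derivative smoothstep' s) (at s)"
proof -
  have cubic: "((\<lambda>s. 3 * s^2 - 2 * s^3) has_real_derivative 6 * s - 6 * s^2) (at s within S)" for S
    by (auto intro!: derivative_eq_intros simp: algebra_simps power2_eq_square)
  consider "s < 0" | "s = 0" | "0 < s \<and> s < 1" | "s = 1" | "1 < s" by linarith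
  then show ?thesis
  proof cases
    case 1
    show ?thesis
      by (rule has_field_derivative_transform_within_open[where f="\<lambda>_. 0" and S="{..<0}"])
         (use 1 in \<open>auto simp: smoothstep_def smoothstep'_def\<close>)
  next
    case 2
    show ?thesis
    proof (rule has_real_derivative_at_split)
      show "(smoothstep has_real_derivative smoothstep' s) (at s within {..s})"
        by (rule has_field_derivative_transform_within[where f="\<lambda>_. 0" and d=1])
           (use 2 in \<open>auto simp: smoothstep_def smoothstep'_def\<close>)
      show "(smoothstep has_real_derivative smoothstep' s) (at s within {s..})"
        by (rule has_field_derivative_transform_within[OF cubic[THEN DERIV_cong], where d=1])
           (use 2 in \<open>auto simp: smoothstep_def smoothstep'_def dist_real_def\<close>)
    qed
  next
    case 3
    show ?thesis
      by (rule has_field_derivative_transform_within_open[OF cubic[THEN DERIV_cong], where S="{0<..<1}"])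
         (use 3 in \<open>auto simp: smoothstep_def smoothstep'_def\<close>)
  next
    case 4
    show ?thesis
    proof (rule has_real_derivative_at_split)
      show "(smoothstep has_real_derivative smoothstep' s) (at s within {s..})"
        by (rule has_field_derivative_transform_within[where f="\<lambda>_. 1" and d=1])
           (use 4 in \<open>auto simp: smoothstep_def smoothstep'_def\<close>)
      show "(smoothstep has_real_derivative smoothstep' s) (at s within {..s})"
        by (rule has_field_derivative_transform_within[OF cubic[THEN DERIV_cong], where d=1])
           (use 4 in \<open>auto simp: smoothstep_def smoothstep'_def dist_real_def\<close>)
    qed
  next
    case 5
    show ?thesis
      by (rule has_field_derivative_transform_within_open[where f="\<lambda>_. 1" and S="{1<..}"])
         (use 5 in \<open>auto simp: smoothstep_def smoothstep'_def\<close>)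
  qed
qed

lemma continuous_on_smoothstep': "continuous_on UNIV smoothstep'"
proof -
  have "smoothstep' = (\<lambda>s. 6 * max 0 (min 1 s) - 6 * (max 0 (min 1 s))^2)"
    by (auto simp: smoothstep'_def fun_eq_iff max_def min_def)
  show ?thesis
    unfolding \<open>smoothstep' = _\<close> by (intro continuous_intros)
qed

lemma smoothstep'_nonneg: "0 \<le> smoothstep' s"
  and smoothstep'_le: "smoothstep' s \<le> 3/2"
proof -
  have "6 * s - 6 * s^2 = 3/2 - 6 * (s - 1/2)^2" "6 * s - 6 * s^2 = 6 * (s * (1 - s))"
    by (simp_all add: power2_eq_square algebra_simps)
  moreover have "0 \<le> s * (1 - s)" if "0 < s" "s < 1"
    using that by simp
  ultimately show "0 \<le> smoothstep' s" "smoothstep' s \<le> 3/2"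
    unfolding smoothstep'_def by (auto simp del: mult_nonneg_nonneg)
qed

lemma smoothstep_mono: "x \<le> y \<Longrightarrow> smoothstep x \<le> smoothstep y"
  by (rule DERIV_nonneg_imp_nondecreasing[of x y smoothstep])
     (use smoothstep_has_real_derivative smoothstep'_nonneg in blast)+

lemma smoothstep_nonneg: "0 \<le> smoothstep s"
  and smoothstep_le_1: "smoothstep s \<le> 1"
  using smoothstep_mono[of "min s 0" s] smoothstep_mono[of s "max s 1"]
  by (simp_all add: smoothstep_eq_0 smoothstep_eq_1)

definition bump :: "real \<Rightarrow> real \<Rightarrow> real \<Rightarrow> real" where
  "bump c d t = smoothstep' ((t - c) / d) / d"

text \<open>\<open>plateau p q d\<close> is \<open>C\<^sup>1\<close>, equal to \<open>1\<close> on \<open>[p, q]\<close> and supported in \<open>[p - d, q + d]\<close>; its derivative is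
  the difference of two unit-mass bumps, so testing a weak derivative against it compares averages
  of the function just left of \<open>p\<close> and just right of \<open>q\<close>.\<close>

definition plateau :: "real \<Rightarrow> real \<Rightarrow> real \<Rightarrow> real \<Rightarrow> real" where
  "plateau p q d t = smoothstep ((t - (p - d)) / d) - smoothstep ((t - q) / d)"

definition plateau' :: "real \<Rightarrow> real \<Rightarrow> real \<Rightarrow> real \<Rightarrow> real" where
  "plateau' p q d t = bump (p - d) d t - bump q d t"

context
  fixes d :: real
  assumes d_pos: "0 < d"
begin

lemma smoothstep_scaled_has_real_derivative:
  "((\<lambda>t. smoothstep ((t - c) / d)) has_real_derivative bump c d t) (at t within S)"
  unfolding bump_def
  by (rule DERIV_chain2[OF smoothstep_has_real_derivative, THEN has_field_derivative_at_within,
        THEN DERIV_cong]) (use d_pos in \<open>auto intro!: derivative_eq_intros\<close>)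

lemma continuous_on_bump: "continuous_on S (bump c d)"
  unfolding bump_def[abs_def]
  by (intro continuous_intros continuous_on_compose2[OF continuous_on_smoothstep']) (use d_pos in auto)

lemma bump_nonneg: "0 \<le> bump c d t"
  unfolding bump_def using smoothstep'_nonneg d_pos by simp

lemma bump_le: "bump c d t \<le> 3 / (2 * d)"
  unfolding bump_def using smoothstep'_le[of "(t - c) / d"] d_pos by (simp add: field_simps)

lemma bump_eq_0: "t \<le> c \<or> c + d \<le> t \<Longrightarrow> bump c d t = 0"
  unfolding bump_def using d_pos by (auto simp: smoothstep'_eq_0 field_simps)

lemma indicator_mult_bump:
  "{c..c+d} \<subseteq> A \<Longrightarrow> indicator A t * bump c d t = indicator {c..c+d} t * bump c d t"
  using bump_eq_0[of t c] by (cases "t \<le> c \<or> c + d \<le> t") (auto simp: subset_iff split: split_indicator)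

lemma integral_bump: "(LBINT t:{c..c+d}. bump c d t) = 1"
proof -
  have "(LBINT t:{c..c+d}. bump c d t) = smoothstep ((c + d - c) / d) - smoothstep ((c - c) / d)"
    unfolding set_lebesgue_integral_def
    by (rule integral_FTC_atLeastAtMost)
       (use d_pos smoothstep_scaled_has_real_derivative continuous_on_bump in
         \<open>auto simp: has_real_derivative_iff_has_vector_derivative[symmetric]\<close>)
  then show ?thesis using d_pos by (simp add: smoothstep_eq_0 smoothstep_eq_1)
qed

lemma plateau_has_real_derivative: "(plateau p q d has_real_derivative plateau' p q d t) (at t)"
  unfolding plateau_def[abs_def] plateau'_def
  by (intro derivative_intros smoothstep_scaled_has_real_derivative)

lemma continuous_on_plateau: "continuous_on S (plateau p q d)"
  by (rule continuous_at_imp_continuous_on) (meson DERIV_isCont plateau_has_real_derivative)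

lemma continuous_on_plateau': "continuous_on S (plateau' p q d)"
  unfolding plateau'_def[abs_def] by (intro continuous_on_diff continuous_on_bump)

lemma abs_plateau'_le: "\<bar>plateau' p q d t\<bar> \<le> 3 / d"
  using bump_nonneg[of "p - d" t] bump_nonneg[of q t] bump_le[of "p - d" t] bump_le[of q t]
  unfolding plateau'_def by (simp add: abs_le_iff)

lemma plateau_eq_1: "p \<le> t \<Longrightarrow> t \<le> q \<Longrightarrow> plateau p q d t = 1"
  unfolding plateau_def using d_pos by (auto simp: smoothstep_eq_0 smoothstep_eq_1 field_simps)

context
  fixes p q :: real
  assumes p_le_q: "p \<le> q"
begin

lemma plateau_nonneg: "0 \<le> plateau p q d t"
  and plateau_le_1: "plateau p q d t \<le> 1"
proof -
  have "(t - q) / d \<le> (t - (p - d)) / d"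
    using d_pos p_le_q by (simp add: divide_right_mono)
  then have "smoothstep ((t - q) / d) \<le> smoothstep ((t - (p - d)) / d)"
    by (rule smoothstep_mono)
  then show "0 \<le> plateau p q d t" "plateau p q d t \<le> 1"
    unfolding plateau_def
    using smoothstep_nonneg[of "(t - q) / d"] smoothstep_le_1[of "(t - (p - d)) / d"] by linarith+
qed

lemma abs_plateau_le_1: "\<bar>plateau p q d t\<bar> \<le> 1"
  using plateau_nonneg plateau_le_1 by simp

lemma plateau_eq_0: "t \<le> p - d \<or> q + d \<le> t \<Longrightarrow> plateau p q d t = 0"
  unfolding plateau_def using d_pos p_le_q by (auto simp: smoothstep_eq_0 smoothstep_eq_1 field_simps)

lemma plateau_neq_0_imp: "plateau p q d t \<noteq> 0 \<Longrightarrow> t \<in> {p - d..q + d}"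
  using plateau_eq_0[of t] by force

lemma closure_plateau_support: "closure {t. plateau p q d t \<noteq> 0} \<subseteq> {p - d..q + d}"
  by (rule closure_minimal) (use plateau_neq_0_imp in auto)

lemma compact_closure_plateau_support: "compact (closure {t. plateau p q d t \<noteq> 0})"
  using compact_Int_closed[OF compact_Icc closed_closure, of "p - d" "q + d" "{t. plateau p q d t \<noteq> 0}"]
    closure_plateau_support by (simp add: Int_absorb1)

end

end

lemma plateau_tendsto_indicator:
  assumes "p \<le> q" and d: "\<And>n. 0 < d n" "d \<longlonglongrightarrow> 0"
  shows "(\<lambda>n. plateau p q (d n) t) \<longlonglongrightarrow> indicator {p..q} t"
proof (cases "t \<in> {p..q}")
  case True
  then show ?thesis using plateau_eq_1[OF d(1)] by simp
next
  case False
  then have "0 < max (p - t) (t - q)" by auto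
  with d(2) have "eventually (\<lambda>n. d n < max (p - t) (t - q)) sequentially"
    by (auto dest: order_tendstoD(2))
  then have "eventually (\<lambda>n. plateau p q (d n) t = indicator {p..q} t) sequentially"
  proof eventually_elim
    case (elim n)
    then have "t \<le> p - d n \<or> q + d n \<le> t" using False by (auto simp: max_def split: if_splits)
    then show ?case using plateau_eq_0[OF d(1) assms(1)] False by simp
  qed
  then show ?thesis by (rule tendsto_eventually)
qed

lemma borel_measurable_plateau: "0 < d \<Longrightarrow> plateau p q d \<in> borel_measurable borel"
  and borel_measurable_plateau': "0 < d \<Longrightarrow> plateau' p q d \<in> borel_measurable borel"
  by (simp_all add: borel_measurable_continuous_onI continuous_on_plateau continuous_on_plateau')

lemma set_integral_bump_restrict:
  fixes u :: "real \<Rightarrow> real"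
  assumes "0 < d" "{c..c+d} \<subseteq> A"
  shows "set_integrable lborel A (\<lambda>t. bump c d t * u t) \<longleftrightarrow> set_integrable lborel {c..c+d} (\<lambda>t. bump c d t * u t)"
    and "(LBINT t:A. bump c d t * u t) = (LBINT t:{c..c+d}. bump c d t * u t)"
proof -
  have "(\<lambda>t. indicator A t *\<^sub>R (bump c d t * u t)) = (\<lambda>t. indicator {c..c+d} t *\<^sub>R (bump c d t * u t))"
    using indicator_mult_bump[OF assms] by (simp add: fun_eq_iff mult.assoc[symmetric])
  then show "set_integrable lborel A (\<lambda>t. bump c d t * u t) \<longleftrightarrow> set_integrable lborel {c..c+d} (\<lambda>t. bump c d t * u t)"
    and "(LBINT t:A. bump c d t * u t) = (LBINT t:{c..c+d}. bump c d t * u t)"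
    by (simp_all add: set_integrable_def set_lebesgue_integral_def)
qed

lemma bump_average_dist_le:
  fixes u :: "real \<Rightarrow> real"
  assumes d: "0 < d" and u: "continuous_on {c..c+d} u"
    and e: "\<And>t. t \<in> {c..c+d} \<Longrightarrow> \<bar>u t - y\<bar> \<le> e"
  shows "\<bar>(LBINT t:{c..c+d}. bump c d t * u t) - y\<bar> \<le> e"
proof -
  have integrable: "set_integrable lborel {c..c+d} (\<lambda>t. bump c d t * f t)"
    if "continuous_on {c..c+d} f" for f
    by (rule borel_integrable_atLeastAtMost') (intro continuous_on_mult continuous_on_bump d that)
  have average: "(LBINT t:{c..c+d}. bump c d t * k) = k" for k
    using integral_bump[OF d] by simp
  have "(LBINT t:{c..c+d}. bump c d t * (u t - y))
      = (LBINT t:{c..c+d}. bump c d t * u t - bump c d t * y)"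
    by (simp add: right_diff_distrib)
  also have "\<dots> = (LBINT t:{c..c+d}. bump c d t * u t) - (LBINT t:{c..c+d}. bump c d t * y)"
    by (rule set_integral_diff(2)[OF integrable[OF u] integrable]) simp
  also have "(LBINT t:{c..c+d}. bump c d t * y) = y"
    by (rule average)
  finally have diff: "(LBINT t:{c..c+d}. bump c d t * u t) - y = (LBINT t:{c..c+d}. bump c d t * (u t - y))"
    by simp
  have pointwise: "bump c d t * - e \<le> bump c d t * (u t - y)" "bump c d t * (u t - y) \<le> bump c d t * e"
    if "t \<in> {c..c+d}" for t
    using e[OF that] mult_left_mono[OF _ bump_nonneg[OF d], of "-e" "u t - y" c t]
      mult_left_mono[OF _ bump_nonneg[OF d], of "u t - y" e c t] by (auto simp: abs_le_iff)
  have "(LBINT t:{c..c+d}. bump c d t * - e) \<le> (LBINT t:{c..c+d}. bump c d t * (u t - y))"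
    "(LBINT t:{c..c+d}. bump c d t * (u t - y)) \<le> (LBINT t:{c..c+d}. bump c d t * e)"
    using pointwise by (intro set_integral_mono integrable continuous_intros u; simp)+
  then show ?thesis unfolding diff average by (simp add: abs_le_iff)
qed

lemma bump_average_tendsto:
  fixes u :: "real \<Rightarrow> real"
  assumes u: "continuous_on {a..b} u" and d: "\<And>n. 0 < d n" "d \<longlonglongrightarrow> 0"
    and c: "\<And>n. {c n..c n + d n} \<subseteq> {a..b}" "\<And>n. c n \<le> x" "\<And>n. x \<le> c n + d n"
  shows "(\<lambda>n. LBINT t:{c n..c n + d n}. bump (c n) (d n) t * u t) \<longlonglongrightarrow> u x"
proof (rule LIMSEQ_I)
  fix r :: real assume "0 < r"
  have x: "x \<in> {a..b}" using c(1)[of 0] c(2,3)[of 0] by auto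
  with u \<open>0 < r\<close> obtain \<delta> where \<delta>: "0 < \<delta>" "\<And>t. t \<in> {a..b} \<Longrightarrow> dist t x < \<delta> \<Longrightarrow> dist (u t) (u x) < r/2"
    unfolding continuous_on_iff by (metis half_gt_zero)
  have "eventually (\<lambda>n. d n < \<delta>) sequentially"
    using d(2) \<delta>(1) by (rule order_tendstoD(2))
  then obtain N where N: "\<And>n. n \<ge> N \<Longrightarrow> d n < \<delta>"
    by (auto simp: eventually_sequentially)
  have "\<bar>(LBINT t:{c n..c n + d n}. bump (c n) (d n) t * u t) - u x\<bar> \<le> r/2" if "n \<ge> N" for n
  proof (rule bump_average_dist_le[OF d(1)])
    show "continuous_on {c n..c n + d n} u" using u c(1) by (rule continuous_on_subset)
    fix t assume "t \<in> {c n..c n + d n}"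
    moreover have "dist t x < \<delta>" using N[OF that] calculation c(2,3)[of n] by (auto simp: dist_real_def)
    ultimately show "\<bar>u t - u x\<bar> \<le> r/2" using \<delta>(2)[of t] c(1)[of n] by (auto simp: dist_real_def)
  qed
  then show "\<exists>N. \<forall>n\<ge>N. norm ((LBINT t:{c n..c n + d n}. bump (c n) (d n) t * u t) - u x) < r"
    using \<open>0 < r\<close> by force
qed

lemma plateau_integral_tendsto:
  fixes w :: "real \<Rightarrow> real"
  assumes w: "set_integrable lborel A w" and pq: "p \<le> q" "{p..q} \<subseteq> A"
    and d: "\<And>n. 0 < d n" "d \<longlonglongrightarrow> 0"
  shows "(\<lambda>n. LBINT t:A. plateau p q (d n) t * w t) \<longlonglongrightarrow> (LBINT t:{p..q}. w t)"
  unfolding set_lebesgue_integral_def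
proof (rule integral_dominated_convergence[where w="\<lambda>t. norm (indicator A t *\<^sub>R w t)"])
  have w_meas: "(\<lambda>t. indicator A t *\<^sub>R w t) \<in> borel_measurable lborel"
    using w unfolding set_integrable_def by (rule borel_measurable_integrable)
  have "(\<lambda>t. indicator {p..q} t * (indicator A t *\<^sub>R w t)) \<in> borel_measurable lborel"
    using w_meas by measurable
  then show "(\<lambda>t. indicator {p..q} t *\<^sub>R w t) \<in> borel_measurable lborel"
    using pq(2) by (auto split: split_indicator elim!: measurable_cong[THEN iffD1, rotated])
  show "(\<lambda>t. indicator A t *\<^sub>R (plateau p q (d n) t * w t)) \<in> borel_measurable lborel" for n
  proof -
    have "plateau p q (d n) \<in> borel_measurable lborel"
      using borel_measurable_continuous_onI[OF continuous_on_plateau[OF d(1)]] by simp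
    then have "(\<lambda>t. plateau p q (d n) t * (indicator A t *\<^sub>R w t)) \<in> borel_measurable lborel"
      using w_meas by (rule borel_measurable_times)
    then show ?thesis by (simp add: mult.left_commute)
  qed
  show "integrable lborel (\<lambda>t. norm (indicator A t *\<^sub>R w t))"
    using w unfolding set_integrable_def by simp
  show "AE t in lborel. (\<lambda>n. indicator A t *\<^sub>R (plateau p q (d n) t * w t))
      \<longlonglongrightarrow> indicator {p..q} t *\<^sub>R w t"
    using pq by (intro AE_I2)
      (auto intro!: tendsto_eq_intros plateau_tendsto_indicator[OF _ d] split: split_indicator)
  show "AE t in lborel. norm (indicator A t *\<^sub>R (plateau p q (d n) t * w t))
      \<le> norm (indicator A t *\<^sub>R w t)" for n
    using abs_plateau_le_1[OF d(1) pq(1)]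
    by (intro AE_I2) (auto simp: abs_mult split: split_indicator intro: mult_left_le_one_le)
qed

section \<open>Weak derivatives tested against plateaus\<close>

text \<open>Weak differentiability on \<open>(-1, 1)\<close>, tested only against the countably many plateaus with
  rational parameters: countability is what lets this property pass to almost every slice of a
  function on the strip.\<close>

definition plateau_weak_deriv :: "(real \<Rightarrow> real) \<Rightarrow> (real \<Rightarrow> real) \<Rightarrow> bool" where
  "plateau_weak_deriv u w \<longleftrightarrow> (\<forall>p\<in>\<rat>. \<forall>q\<in>\<rat>. \<forall>d\<in>\<rat>. 0 < d \<and> p \<le> q \<and> -1 < p - d \<and> q + d < 1 \<longrightarrow>
     (LBINT t:{-1<..<1}. plateau' p q d t * u t) = - (LBINT t:{-1<..<1}. plateau p q d t * w t))"

lemma rational_null_sequence: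
  fixes r :: real
  assumes "0 < r"
  obtains d :: "nat \<Rightarrow> real" where "\<And>n. 0 < d n" "\<And>n. d n < r" "\<And>n. d n \<in> \<rat>" "d \<longlonglongrightarrow> 0"
proof -
  obtain N :: nat where N: "inverse (real (Suc N)) < r"
    using reals_Archimedean[OF assms] by blast
  define d where "d n = inverse (real (Suc (n + N)))" for n
  have le: "d n \<le> inverse (real (Suc N))" for n
    unfolding d_def by (rule le_imp_inverse_le) auto
  show ?thesis
  proof (rule that)
    show "0 < d n" "d n \<in> \<rat>" for n by (simp_all add: d_def)
    show "d n < r" for n using le[of n] N by linarith
    show "d \<longlonglongrightarrow> 0"
      unfolding d_def using LIMSEQ_ignore_initial_segment[OF LIMSEQ_inverse_real_of_nat, of N] by simp
  qed
qed

lemma plateau_weak_deriv_increment: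
  fixes u w :: "real \<Rightarrow> real"
  assumes u: "continuous_on {-1..1} u" and w: "set_integrable lborel {-1<..<1} w"
    and weak: "plateau_weak_deriv u w"
    and pq: "p \<in> \<rat>" "q \<in> \<rat>" "-1 < p" "p \<le> q" "q < 1"
  shows "u q - u p = (LBINT t:{p..q}. w t)"
proof -
  have "0 < min (p + 1) (1 - q)" using pq by auto
  then obtain d :: "nat \<Rightarrow> real" where d_pos: "\<And>n. 0 < d n" and "\<And>n. d n < min (p + 1) (1 - q)"
    and d_rat: "\<And>n. d n \<in> \<rat>" and d_tendsto: "d \<longlonglongrightarrow> 0"
    using rational_null_sequence by blast
  then have d_small: "-1 < p - d n" "q + d n < 1" for n
    by (smt (verit) min_less_iff_conj)+
  define avg where "avg c n = (LBINT t:{c n..c n + d n}. bump (c n) (d n) t * u t)" for c n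
  have bump_integrable: "set_integrable lborel {-1<..<1} (\<lambda>t. bump c (d n) t * u t)"
    if "-1 < c" "c + d n < 1" for c n
    using that d_pos[of n]
    by (subst set_integral_bump_restrict(1)[OF d_pos])
       (auto intro!: borel_integrable_atLeastAtMost' continuous_on_mult continuous_on_bump
         intro: continuous_on_subset[OF u])
  have identity: "avg (\<lambda>n. p - d n) n - avg (\<lambda>_. q) n = - (LBINT t:{-1<..<1}. plateau p q (d n) t * w t)" for n
  proof -
    have sub: "{p - d n..p - d n + d n} \<subseteq> {-1<..<1}" "{q..q + d n} \<subseteq> {-1<..<1}"
      using d_small[of n] pq by auto
    have "avg (\<lambda>n. p - d n) n - avg (\<lambda>_. q) n
        = (LBINT t:{-1<..<1}. bump (p - d n) (d n) t * u t) - (LBINT t:{-1<..<1}. bump q (d n) t * u t)"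
      unfolding avg_def set_integral_bump_restrict(2)[OF d_pos sub(1)]
        set_integral_bump_restrict(2)[OF d_pos sub(2)] ..
    also have "\<dots> = (LBINT t:{-1<..<1}. plateau' p q (d n) t * u t)"
      unfolding plateau'_def left_diff_distrib
      by (rule set_integral_diff(2)[symmetric]; rule bump_integrable)
         (use d_small[of n] pq in linarith)+
    also have "\<dots> = - (LBINT t:{-1<..<1}. plateau p q (d n) t * w t)"
      using weak pq d_rat d_pos d_small unfolding plateau_weak_deriv_def by blast
    finally show ?thesis .
  qed
  have avg_tendsto: "(\<lambda>n. avg (\<lambda>n. p - d n) n - avg (\<lambda>_. q) n) \<longlonglongrightarrow> u p - u q"
    unfolding avg_def using d_pos d_small pq
    by (intro tendsto_diff bump_average_tendsto[OF u d_pos d_tendsto]) (auto simp: less_imp_le)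
  have "(\<lambda>n. LBINT t:{-1<..<1}. plateau p q (d n) t * w t) \<longlonglongrightarrow> (LBINT t:{p..q}. w t)"
    using pq by (intro plateau_integral_tendsto w d_pos d_tendsto) auto
  then have "(\<lambda>n. avg (\<lambda>n. p - d n) n - avg (\<lambda>_. q) n) \<longlonglongrightarrow> - (LBINT t:{p..q}. w t)"
    unfolding identity by (rule tendsto_minus)
  with avg_tendsto show ?thesis
    using LIMSEQ_unique by fastforce
qed

lemma set_integral_nonneg:
  fixes f :: "_ \<Rightarrow> real"
  shows "(\<And>x. x \<in> A \<Longrightarrow> 0 \<le> f x) \<Longrightarrow> 0 \<le> (LINT x:A|M. f x)"
  unfolding set_lebesgue_integral_def
  by (rule Bochner_Integration.integral_nonneg) (auto split: split_indicator)

lemma set_integral_mono_subset: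
  fixes f :: "_ \<Rightarrow> real"
  assumes "set_integrable M B f" "A \<subseteq> B" "A \<in> sets M" "\<And>x. x \<in> B \<Longrightarrow> 0 \<le> f x"
  shows "(LINT x:A|M. f x) \<le> (LINT x:B|M. f x)"
  unfolding set_lebesgue_integral_def
  using assms set_integrable_subset[OF assms(1) assms(3) assms(2)]
  by (intro integral_mono) (auto simp: set_integrable_def split: split_indicator)

lemma set_integrable_of_square:
  fixes w :: "real \<Rightarrow> real"
  assumes "set_borel_measurable lborel A w" "set_integrable lborel A (\<lambda>t. (w t)^2)"
    and "A \<subseteq> {a..b}" "A \<in> sets lborel"
  shows "set_integrable lborel A w"
proof (rule set_integrable_bound[OF _ assms(1)])
  have "set_integrable lborel A (\<lambda>_. 1 :: real)"
    by (rule set_integrable_subset[OF borel_integrable_atLeastAtMost']) (use assms in auto)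
  then show "set_integrable lborel A (\<lambda>t. 1 + (w t)^2)"
    using assms(2) by (rule set_integral_add(1))
  have "\<bar>w t\<bar> \<le> 1 + (w t)^2" for t
    using zero_le_power2[of "\<bar>w t\<bar> - 1/2"] by (simp add: power2_eq_square algebra_simps)
  then show "AE t in lborel. t \<in> A \<longrightarrow> norm (w t) \<le> norm (1 + (w t)^2)"
    by simp
qed

lemma power2_set_integral_le:
  fixes w :: "real \<Rightarrow> real"
  assumes ab: "a \<le> b" and w: "set_integrable lborel {a..b} w"
    and w2: "set_integrable lborel {a..b} (\<lambda>t. (w t)^2)"
  shows "(LBINT t:{a..b}. w t)^2 \<le> (b - a) * (LBINT t:{a..b}. (w t)^2)"
proof (cases "a = b")
  case True
  have "AE t in lborel. indicator {a..b} t *\<^sub>R w t = 0"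
    using AE_lborel_singleton[of a] by eventually_elim (use True in \<open>auto split: split_indicator\<close>)
  then have "(LBINT t:{a..b}. w t) = 0"
    unfolding set_lebesgue_integral_def by (rule integral_eq_zero_AE)
  with True show ?thesis by simp
next
  case False
  with ab have "0 < b - a" by simp
  define W1 where "W1 = (LBINT t:{a..b}. w t)"
  define W2 where "W2 = (LBINT t:{a..b}. (w t)^2)"
  define l where "l = W1 / (b - a)"
  have const: "set_integrable lborel {a..b} (\<lambda>_. k)" "(LBINT t:{a..b}. k) = (b - a) * k" for k :: real
    using ab by (simp_all add: borel_integrable_atLeastAtMost' set_integral_const measure_def)
  have "0 \<le> (LBINT t:{a..b}. (w t - l)^2)"
    by (rule set_integral_nonneg) simp
  also have "\<dots> = (LBINT t:{a..b}. (w t)^2 - 2 * l * w t + l^2)"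
    by (simp add: power2_eq_square algebra_simps)
  also have "\<dots> = W2 - 2 * l * W1 + (b - a) * l^2"
    unfolding W1_def W2_def using w w2 const
    by (simp add: set_integral_add set_integral_diff set_integrable_mult_right)
  also have "\<dots> = W2 - W1^2 / (b - a)"
  proof -
    have "2 * (W1 / D) * W1 - D * (W1 / D)^2 = W1^2 / D" if "D \<noteq> 0" for D :: real
      using that by (simp add: field_simps power2_eq_square)
    then show ?thesis unfolding l_def using \<open>0 < b - a\<close> by (smt (verit))
  qed
  finally show ?thesis
    using \<open>0 < b - a\<close> by (simp add: W1_def W2_def field_simps)
qed

lemma continuous_on_le_of_rat_le:
  fixes g :: "real \<Rightarrow> real"
  assumes "a < b" "continuous_on {a..b} g" "\<And>r. r \<in> \<rat> \<Longrightarrow> a < r \<Longrightarrow> r < b \<Longrightarrow> g r \<le> M"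
    and "x \<in> {a..b}"
  shows "g x \<le> M"
proof (rule ccontr)
  assume "\<not> g x \<le> M"
  then have "0 < g x - M" by simp
  with assms(2,4) obtain \<delta> where \<delta>: "0 < \<delta>" "\<And>t. t \<in> {a..b} \<Longrightarrow> dist t x < \<delta> \<Longrightarrow> dist (g t) (g x) < g x - M"
    unfolding continuous_on_iff by metis
  have "max a (x - \<delta>) < min b (x + \<delta>)" using assms(1,4) \<delta>(1) by auto
  then obtain r where r: "r \<in> \<rat>" "max a (x - \<delta>) < r" "r < min b (x + \<delta>)"
    using Rats_dense_in_real by blast
  then have "dist (g r) (g x) < g x - M"
    using \<delta>(2)[of r] by (auto simp: dist_real_def abs_less_iff)
  with r assms(3)[of r] show False by (auto simp: dist_real_def)
qed

context
  fixes u w :: "real \<Rightarrow> real"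
  assumes u: "continuous_on {-1..1} u" "u (-1) = 0" "u 1 = 0"
    and w: "set_borel_measurable lborel {-1<..<1} w" "set_integrable lborel {-1<..<1} (\<lambda>t. (w t)^2)"
    and weak: "plateau_weak_deriv u w"
begin

lemma plateau_weak_deriv_increment_sq_le:
  assumes "-1 \<le> a" "a \<le> b" "b \<le> 1"
  shows "(u b - u a)^2 \<le> (b - a) * (LBINT t:{a<..<b}. (w t)^2)"
proof (cases "a = b")
  case False
  define M where "M = (b - a) * (LBINT t:{a<..<b}. (w t)^2)"
  have w_sq: "set_integrable lborel A (\<lambda>t. (w t)^2)" if "A \<subseteq> {-1<..<1}" "A \<in> sets lborel" for A
    using set_integrable_subset[OF w(2) that(2,1)] .
  have w_int: "set_integrable lborel {-1<..<1} w"
    by (rule set_integrable_of_square[OF w, of "-1" 1]) auto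
  have rat: "(u q - u p)^2 \<le> M" if "p \<in> \<rat>" "q \<in> \<rat>" "a < p" "p \<le> q" "q < b" for p q
  proof -
    have "(u q - u p)^2 = (LBINT t:{p..q}. w t)^2"
      using plateau_weak_deriv_increment[OF u(1) w_int weak] that assms by simp
    also have "\<dots> \<le> (q - p) * (LBINT t:{p..q}. (w t)^2)"
      using that assms
      by (intro power2_set_integral_le set_integrable_subset[OF w_int] w_sq) auto
    also have "\<dots> \<le> M"
      unfolding M_def using that assms
      by (intro mult_mono set_integral_mono_subset w_sq set_integral_nonneg) auto
    finally show ?thesis .
  qed
  have cont: "continuous_on {a..y} (\<lambda>x. (u y - u x)^2)" "continuous_on {a..y} (\<lambda>x. (u x - u a)^2)"
    if "y \<le> b" for y
    using that assms by (intro continuous_intros continuous_on_subset[OF u(1)]; auto)+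
  have "(u q - u a)^2 \<le> M" if "q \<in> \<rat>" "a < q" "q < b" for q
    using continuous_on_le_of_rat_le[of a q "\<lambda>p. (u q - u p)^2" M a] that rat cont(1)[of q] by auto
  then have "(u b - u a)^2 \<le> M"
    using continuous_on_le_of_rat_le[of a b "\<lambda>q. (u q - u a)^2" M b] False assms cont(2)[of b] by auto
  then show ?thesis unfolding M_def .
qed simp

lemma plateau_weak_deriv_sq_le:
  assumes "x \<in> {-1..1}"
  shows "(u x)^2 \<le> 2 * (LBINT t:{-1<..<1}. (w t)^2)"
proof -
  have "(u x)^2 \<le> (x + 1) * (LBINT t:{-1<..<x}. (w t)^2)"
    using plateau_weak_deriv_increment_sq_le[of "-1" x] assms u(2) by simp
  also have "\<dots> \<le> 2 * (LBINT t:{-1<..<1}. (w t)^2)"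
    using assms by (intro mult_mono set_integral_mono_subset w(2) set_integral_nonneg) auto
  finally show ?thesis .
qed

lemma plateau_weak_deriv_center_sq_le: "2 * (u 0)^2 \<le> (LBINT t:{-1<..<1}. (w t)^2)"
proof -
  have "(u 0)^2 \<le> (LBINT t:{-1<..<0}. (w t)^2)"
    using plateau_weak_deriv_increment_sq_le[of "-1" 0] u(2) by simp
  moreover have "(u 0)^2 \<le> (LBINT t:{0<..<1}. (w t)^2)"
    using plateau_weak_deriv_increment_sq_le[of 0 1] u(3) by simp
  moreover have "(LBINT t:{-1<..<0} \<union> {0<..<1}. (w t)^2)
      = (LBINT t:{-1<..<0}. (w t)^2) + (LBINT t:{0<..<1}. (w t)^2)"
    by (intro set_integral_Un set_integrable_subset[OF w(2)]) auto
  moreover have "(LBINT t:{-1<..<0} \<union> {0<..<1}. (w t)^2) \<le> (LBINT t:{-1<..<1}. (w t)^2)"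
    by (intro set_integral_mono_subset w(2)) auto
  ultimately show ?thesis by linarith
qed

end

section \<open>The critical field\<close>

lemma test_fun_int_plateau:
  assumes "0 < d" "p \<le> q" "-1 < p - d" "q + d < 1"
  shows "test_fun_int (plateau p q d) (plateau' p q d)"
  unfolding test_fun_int_def
  using plateau_has_real_derivative[OF assms(1)] continuous_on_plateau'[OF assms(1)]
    compact_closure_plateau_support[OF assms(1,2)] closure_plateau_support[OF assms(1,2)] assms(3,4)
  by auto

lemma H01_int_plateau_weak_deriv: "H01_int \<psi> d\<psi> \<Longrightarrow> plateau_weak_deriv \<psi> d\<psi>"
  unfolding H01_int_def plateau_weak_deriv_def using test_fun_int_plateau by blast

lemma H01_int_center_sq_le:
  assumes "H01_int \<psi> d\<psi>"
  shows "2 * (\<psi> 0)^2 \<le> (LBINT t:{-1<..<1}. (d\<psi> t)^2)"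
  using assms plateau_weak_deriv_center_sq_le[OF _ _ _ _ _ H01_int_plateau_weak_deriv[OF assms]]
  unfolding H01_int_def by blast

definition tent :: "real \<Rightarrow> real" where
  "tent t = 1 - \<bar>t\<bar>"

definition tent' :: "real \<Rightarrow> real" where
  "tent' t = (if t \<le> 0 then 1 else -1)"

lemma borel_measurable_tent' [measurable]: "tent' \<in> borel_measurable borel"
  unfolding tent'_def[abs_def] by measurable

lemma continuous_on_tent: "continuous_on S tent"
  unfolding tent_def[abs_def] by (intro continuous_intros)

lemma test_fun_int_continuous: "test_fun_int \<phi> \<phi>' \<Longrightarrow> continuous_on UNIV \<phi>"
  unfolding test_fun_int_def by (intro continuous_at_imp_continuous_on) (meson DERIV_isCont)

lemma interval_integral_test_fun_mult_affine:
  assumes "test_fun_int \<phi> \<phi>'"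
  shows "(LBINT t=a..b. \<phi>' t * (c + s * t) + \<phi> t * s) = \<phi> b * (c + s * b) - \<phi> a * (c + s * a)"
proof (rule interval_integral_FTC_finite)
  have \<phi>': "\<And>t. (\<phi> has_real_derivative \<phi>' t) (at t)" "continuous_on UNIV \<phi>'"
    using assms unfolding test_fun_int_def by auto
  show "continuous_on {min a b..max a b} (\<lambda>t. \<phi>' t * (c + s * t) + \<phi> t * s)"
    by (intro continuous_intros continuous_on_subset[OF \<phi>'(2)]
        continuous_on_subset[OF test_fun_int_continuous[OF assms]]) auto
  fix x
  have "((\<lambda>t. \<phi> t * (c + s * t)) has_real_derivative \<phi>' x * (c + s * x) + \<phi> x * s) (at x)"
    using DERIV_mult[OF \<phi>'(1)[of x] DERIV_add[OF DERIV_const[of c] DERIV_cmult[OF DERIV_ident, where c=s]]]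
    by (simp add: mult.commute)
  then show "((\<lambda>t. \<phi> t * (c + s * t)) has_vector_derivative \<phi>' x * (c + s * x) + \<phi> x * s)
      (at x within {min a b..max a b})"
    by (simp add: has_real_derivative_iff_has_vector_derivative[symmetric] has_field_derivative_at_within)
qed

lemma tent_weak_deriv:
  assumes "test_fun_int \<phi> \<phi>'"
  shows "(LBINT t:{-1<..<1}. \<phi>' t * tent t) = - (LBINT t:{-1<..<1}. \<phi> t * tent' t)"
proof -
  have \<phi>': "continuous_on UNIV \<phi>'" and \<phi>: "continuous_on UNIV \<phi>"
    using assms test_fun_int_continuous unfolding test_fun_int_def by auto
  define h where "h t = \<phi>' t * tent t + \<phi> t * tent' t" for t
  have "(LBINT t=-1..0. h t) = (LBINT t=-1..0. \<phi>' t * (1 + 1 * t) + \<phi> t * 1)"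
    by (rule interval_integral_cong) (auto simp: h_def tent_def tent'_def einterval_def)
  also have "\<dots> = \<phi> 0"
    using interval_integral_test_fun_mult_affine[OF assms, of "-1" 0 1 1]
    by (simp add: zero_ereal_def one_ereal_def)
  finally have left: "(LBINT t=-1..0. h t) = \<phi> 0" .
  have "(LBINT t=0..1. h t) = (LBINT t=0..1. \<phi>' t * (1 + -1 * t) + \<phi> t * -1)"
    by (rule interval_integral_cong) (auto simp: h_def tent_def tent'_def einterval_def)
  also have "\<dots> = - \<phi> 0"
    using interval_integral_test_fun_mult_affine[OF assms, of 0 1 1 "-1"]
    by (simp add: zero_ereal_def one_ereal_def)
  finally have right: "(LBINT t=0..1. h t) = - \<phi> 0" .
  have int1: "set_integrable lborel {-1<..<1} (\<lambda>t. \<phi>' t * tent t)"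
    by (rule set_integrable_subset[OF borel_integrable_atLeastAtMost'[of "-1" 1]])
       (auto intro!: continuous_intros continuous_on_tent continuous_on_subset[OF \<phi>'])
  have int2: "set_integrable lborel {-1<..<1} (\<lambda>t. \<phi> t * tent' t)"
  proof (rule set_integrable_bound)
    show "set_integrable lborel {-1<..<1} \<phi>"
      by (rule set_integrable_subset[OF borel_integrable_atLeastAtMost'[of "-1" 1]])
         (auto intro: continuous_on_subset[OF \<phi>])
    show "set_borel_measurable lborel {-1<..<1} (\<lambda>t. \<phi> t * tent' t)"
      using borel_measurable_continuous_onI[OF \<phi>] unfolding set_borel_measurable_def by measurable
  qed (auto simp: tent'_def abs_mult)
  have open_interval: "einterval (-1) 1 = {-1<..<1::real}"
    by (auto simp: einterval_def one_ereal_def)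
  have "(LBINT t=-1..0. h t) + (LBINT t=0..1. h t) = (LBINT t=-1..1. h t)"
    using set_integral_add(1)[OF int1 int2]
    by (intro interval_integral_sum)
       (simp add: interval_lebesgue_integrable_def open_interval h_def max_def min_def one_ereal_def)
  also have "\<dots> = (LBINT t:{-1<..<1}. h t)"
    by (subst interval_lebesgue_integral_le_eq) (simp_all add: open_interval one_ereal_def)
  finally have "(LBINT t:{-1<..<1}. h t) = (LBINT t=-1..0. h t) + (LBINT t=0..1. h t)" ..
  then have "(LBINT t:{-1<..<1}. h t) = 0" using left right by simp
  then show ?thesis
    unfolding h_def using set_integral_add(2)[OF int1 int2] by simp
qed

lemma H01_int_tent: "H01_int tent tent'"
  unfolding H01_int_def
proof (intro conjI allI impI)
  show "set_borel_measurable lborel {-1<..<1} tent" "set_borel_measurable lborel {-1<..<1} tent'"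
    using borel_measurable_continuous_onI[OF continuous_on_tent]
    unfolding set_borel_measurable_def by measurable
  show "set_integrable lborel {-1<..<1} (\<lambda>t. (tent t)^2)"
    by (rule set_integrable_subset[OF borel_integrable_atLeastAtMost'[of "-1" 1]])
       (auto intro!: continuous_intros continuous_on_tent)
  have "set_integrable lborel {-1..1::real} (\<lambda>_. 1 :: real)"
    by (rule borel_integrable_atLeastAtMost') simp
  then have "set_integrable lborel {-1<..<1::real} (\<lambda>_. 1 :: real)"
    by (rule set_integrable_subset) auto
  moreover have "(\<lambda>t. (tent' t)^2) = (\<lambda>_. 1)" by (simp add: fun_eq_iff tent'_def)
  ultimately show "set_integrable lborel {-1<..<1} (\<lambda>t. (tent' t)^2)"
    by simp
  show "continuous_on {-1..1} tent" by (rule continuous_on_tent)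
  show "tent (-1) = 0" "tent 1 = 0" by (simp_all add: tent_def)
  show "(LBINT t:{-1<..<1}. \<phi>' t * tent t) = - (LBINT t:{-1<..<1}. \<phi> t * tent' t)"
    if "test_fun_int \<phi> \<phi>'" for \<phi> \<phi>'
    using that by (rule tent_weak_deriv)
qed

lemma integral_tent'_sq: "(LBINT t:{-1<..<1}. (tent' t)^2) = 2"
proof -
  have "(\<lambda>t. (tent' t)^2) = (\<lambda>_. 1)" by (simp add: fun_eq_iff tent'_def)
  then show ?thesis by (simp add: set_integral_const)
qed

lemma Bc_sq_eq:
  assumes "0 \<le> g * rho"
  shows "Bc_sq g rho = g * rho / 2"
  unfolding Bc_sq_def
proof (rule cSup_eq_maximum)
  have "g * rho / 2 = g * rho * (tent 0)^2 / (LBINT t:{-1<..<1}. (tent' t)^2)"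
    by (simp add: integral_tent'_sq tent_def)
  moreover have "\<exists>t\<in>{-1<..<1}. tent t \<noteq> 0"
    by (rule bexI[of _ 0]) (simp_all add: tent_def)
  ultimately show "g * rho / 2 \<in> {g * rho * (\<psi> 0)^2 / (LBINT t:{-1<..<1}. (d\<psi> t)^2) | \<psi> d\<psi>.
      H01_int \<psi> d\<psi> \<and> (\<exists>t\<in>{-1<..<1}. \<psi> t \<noteq> 0)}"
    using H01_int_tent by blast
next
  fix x
  assume "x \<in> {g * rho * (\<psi> 0)^2 / (LBINT t:{-1<..<1}. (d\<psi> t)^2) | \<psi> d\<psi>.
      H01_int \<psi> d\<psi> \<and> (\<exists>t\<in>{-1<..<1}. \<psi> t \<noteq> 0)}"
  then obtain \<psi> d\<psi> where x: "x = g * rho * (\<psi> 0)^2 / (LBINT t:{-1<..<1}. (d\<psi> t)^2)"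
    and "H01_int \<psi> d\<psi>"
    by blast
  from \<open>H01_int \<psi> d\<psi>\<close> have bound: "2 * (\<psi> 0)^2 \<le> (LBINT t:{-1<..<1}. (d\<psi> t)^2)"
    by (rule H01_int_center_sq_le)
  show "x \<le> g * rho / 2"
  proof (cases "(LBINT t:{-1<..<1}. (d\<psi> t)^2) = 0")
    case False
    with bound have "0 < (LBINT t:{-1<..<1}. (d\<psi> t)^2)"
      by (smt (verit) zero_le_power2)
    moreover have "g * rho * (\<psi> 0)^2 \<le> g * rho / 2 * (LBINT t:{-1<..<1}. (d\<psi> t)^2)"
      using mult_left_mono[OF bound assms] by simp
    ultimately show ?thesis unfolding x by (simp add: divide_le_eq)
  qed (use x assms in simp)
qed

lemma Bc_less_imp_sq_gt:
  assumes "0 < g" "0 < rho" "Bc g rho < b"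
  shows "g * rho / 2 < b^2"
proof -
  have "0 \<le> g * rho" using assms(1,2) by simp
  then have "sqrt (g * rho / 2) < b"
    using assms(3) by (simp add: Bc_def Bc_sq_eq)
  then have "(sqrt (g * rho / 2))^2 < b^2"
    using \<open>0 \<le> g * rho\<close> by (intro power_strict_mono) auto
  then show ?thesis using assms(1,2) by simp
qed

section \<open>Functions with vanishing integrals\<close>

lemma emeasure_density_eq_set_integral:
  fixes h :: "real \<Rightarrow> real"
  assumes h: "integrable lborel h" "\<And>x. 0 \<le> h x" and A: "A \<in> sets borel"
  shows "emeasure (density lborel (\<lambda>x. ennreal (h x))) A = ennreal (LBINT t:A. h t)"
proof -
  have "emeasure (density lborel (\<lambda>x. ennreal (h x))) A = (\<integral>\<^sup>+ t. ennreal (indicator A t * h t) \<partial>lborel)"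
    using borel_measurable_integrable[OF h(1)] A
    by (subst emeasure_density) (auto intro!: nn_integral_cong split: split_indicator)
  also have "\<dots> = ennreal (LBINT t:A. h t)"
    unfolding set_lebesgue_integral_def
    using integrable_mult_indicator[OF _ h(1), of A] A h(2)
    by (subst nn_integral_eq_integral) (auto split: split_indicator)
  finally show ?thesis .
qed

lemma AE_zero_of_halfline_integrals_zero:
  fixes H :: "real \<Rightarrow> real"
  assumes H: "integrable lborel H" and zero: "\<And>x. (LBINT t:{x<..}. H t) = 0"
  shows "AE x in lborel. H x = 0"
proof -
  define hp where "hp x = max 0 (H x)" for x
  define hn where "hn x = max 0 (- H x)" for x
  have hp: "integrable lborel hp" and hn: "integrable lborel hn"
    unfolding hp_def hn_def using H by auto
  have density: "emeasure (density lborel (\<lambda>x. ennreal (hp x))) {x<..} = ennreal (LBINT t:{x<..}. hp t)"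
    "emeasure (density lborel (\<lambda>x. ennreal (hn x))) {x<..} = ennreal (LBINT t:{x<..}. hn t)" for x
    by (intro emeasure_density_eq_set_integral hp hn; simp add: hp_def hn_def)+
  have "(LBINT t:{x<..}. hp t) - (LBINT t:{x<..}. hn t) = (LBINT t:{x<..}. H t)" for x
  proof -
    have "(LBINT t:{x<..}. hp t) - (LBINT t:{x<..}. hn t) = (LBINT t:{x<..}. hp t - hn t)"
      unfolding set_integrable_def
      by (rule set_integral_diff(2)[symmetric]; unfold set_integrable_def;
          rule integrable_mult_indicator) (simp_all add: hp hn)
    also have "(\<lambda>t. hp t - hn t) = H"
      by (auto simp: fun_eq_iff hp_def hn_def)
    finally show ?thesis .
  qed
  then have "density lborel (\<lambda>x. ennreal (hp x)) = density lborel (\<lambda>x. ennreal (hn x))"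
    using zero by (intro measure_eqI_lessThan) (simp_all add: density)
  then have "AE x in lborel. ennreal (hp x) = ennreal (hn x)"
    using borel_measurable_integrable[OF hp] borel_measurable_integrable[OF hn]
    by (intro sigma_finite_measure.density_unique[OF sigma_finite_lborel]) simp_all
  then show ?thesis
    by eventually_elim (auto simp: hp_def hn_def max_def split: if_splits)
qed

lemma AE_zero_of_interval_integrals_zero:
  fixes G :: "real \<Rightarrow> real"
  assumes G: "G \<in> borel_measurable borel" "\<And>a b. set_integrable lborel {a..b} G"
    and zero: "\<And>a b. a \<le> b \<Longrightarrow> (LBINT t:{a..b}. G t) = 0"
  shows "AE x in lborel. G x = 0"
proof -
  have "AE x in lborel. indicator {-real k..real k} x * G x = 0" for k :: nat
  proof (rule AE_zero_of_halfline_integrals_zero)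
    show "integrable lborel (\<lambda>x. indicator {-real k..real k} x * G x)"
      using G(2)[of "-real k" "real k"] by (simp add: set_integrable_def)
    show "(LBINT t:{x<..}. indicator {-real k..real k} t * G t) = 0" for x
    proof (cases "real k \<le> x")
      case True
      then have "(\<lambda>t. indicator {x<..} t *\<^sub>R (indicator {-real k..real k} t * G t)) = (\<lambda>_. 0)"
        by (auto simp: fun_eq_iff split: split_indicator)
      then show ?thesis by (simp add: set_lebesgue_integral_def)
    next
      case False
      have "(LBINT t:{x<..}. indicator {-real k..real k} t * G t) = (LBINT t:{max x (-real k)..real k}. G t)"
        unfolding set_lebesgue_integral_def using G(1) AE_lborel_singleton[of x]
        by (intro integral_cong_AE) (auto elim!: eventually_mono split: split_indicator)
      also have "\<dots> = 0" using False by (intro zero) auto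
      finally show ?thesis .
    qed
  qed
  then have "AE x in lborel. \<forall>k::nat. indicator {-real k..real k} x * G x = 0"
    by (subst AE_all_countable) blast
  then show ?thesis
  proof eventually_elim
    case (elim x)
    obtain k :: nat where "\<bar>x\<bar> \<le> real k" using real_arch_simple by blast
    then have "x \<in> {-real k..real k}" by auto
    with elim[rule_format, of k] show "G x = 0" by simp
  qed
qed

lemma AE_zero_of_plateau_integrals_zero:
  fixes G :: "real \<Rightarrow> real"
  assumes G: "G \<in> borel_measurable borel" "\<And>a b. set_integrable lborel {a..b} G"
    and zero: "\<And>a b e. a \<le> b \<Longrightarrow> 0 < e \<Longrightarrow> e \<le> 1 \<Longrightarrow> (\<integral>x. plateau a b e x * G x \<partial>lborel) = 0"
  shows "AE x in lborel. G x = 0"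
proof (rule AE_zero_of_interval_integrals_zero[OF G])
  fix a b :: real
  assume "a \<le> b"
  define e where "e n = inverse (real (Suc n))" for n
  have e: "0 < e n" "e n \<le> 1" for n unfolding e_def by (simp_all add: inverse_le_1_iff)
  have "e \<longlonglongrightarrow> 0" unfolding e_def by (rule LIMSEQ_inverse_real_of_nat)
  then have "(\<lambda>n. LBINT t:{a-1..b+1}. plateau a b (e n) t * G t) \<longlonglongrightarrow> (LBINT t:{a..b}. G t)"
    using \<open>a \<le> b\<close> by (intro plateau_integral_tendsto G(2) e(1)) auto
  moreover have "(LBINT t:{a-1..b+1}. plateau a b (e n) t * G t) = 0" for n
  proof -
    have "(\<lambda>t. indicator {a-1..b+1} t *\<^sub>R (plateau a b (e n) t * G t)) = (\<lambda>t. plateau a b (e n) t * G t)"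
      using plateau_eq_0[OF e(1)[of n] \<open>a \<le> b\<close>] e(2)[of n] by (force split: split_indicator)
    then show ?thesis
      unfolding set_lebesgue_integral_def using zero[OF \<open>a \<le> b\<close> e] by (simp only:)
  qed
  ultimately show "(LBINT t:{a..b}. G t) = 0"
    by (simp add: LIMSEQ_const_iff)
qed

section \<open>Slicing the strip\<close>

lemma indicator_strip_Pair: "indicator strip (x1, t) = (indicator {-1<..<1} t :: real)"
  by (auto simp: strip_def split: split_indicator)

lemma test_fun_strip_plateau_tensor:
  assumes ab: "0 < e" "a \<le> b" and pq: "0 < d" "p \<le> q" "-1 < p - d" "q + d < 1"
  shows "test_fun_strip (\<lambda>x. plateau a b e (fst x) * plateau p q d (snd x))
     (\<lambda>x. plateau' a b e (fst x) * plateau p q d (snd x)) (\<lambda>x. plateau a b e (fst x) * plateau' p q d (snd x))"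
  unfolding test_fun_strip_def
proof (intro conjI allI)
  fix x :: "real \<times> real"
  have "((\<lambda>x. plateau a b e (fst x)) has_derivative (\<lambda>h. fst h * plateau' a b e (fst x))) (at x)"
    by (rule DERIV_compose_FDERIV[OF plateau_has_real_derivative[OF ab(1)] has_derivative_fst[OF has_derivative_ident]])
  moreover have "((\<lambda>x. plateau p q d (snd x)) has_derivative (\<lambda>h. snd h * plateau' p q d (snd x))) (at x)"
    by (rule DERIV_compose_FDERIV[OF plateau_has_real_derivative[OF pq(1)] has_derivative_snd[OF has_derivative_ident]])
  ultimately show "((\<lambda>x. plateau a b e (fst x) * plateau p q d (snd x)) has_derivative
      (\<lambda>h. fst h * (plateau' a b e (fst x) * plateau p q d (snd x)) + snd h * (plateau a b e (fst x) * plateau' p q d (snd x))))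
      (at x)"
    by (rule has_derivative_eq_rhs[OF has_derivative_mult]) (simp add: fun_eq_iff algebra_simps)
next
  have fst: "continuous_on UNIV (\<lambda>x::real \<times> real. f (fst x))"
    and snd: "continuous_on UNIV (\<lambda>x::real \<times> real. f (snd x))" if "continuous_on UNIV f" for f
    using continuous_on_compose2[OF that continuous_on_fst[OF continuous_on_id]]
      continuous_on_compose2[OF that continuous_on_snd[OF continuous_on_id]] by auto
  show "continuous_on UNIV (\<lambda>x. plateau' a b e (fst x) * plateau p q d (snd x))"
    "continuous_on UNIV (\<lambda>x. plateau a b e (fst x) * plateau' p q d (snd x))"
    by (intro continuous_on_mult fst snd continuous_on_plateau continuous_on_plateau' ab pq)+
  have support: "{x. plateau a b e (fst x) * plateau p q d (snd x) \<noteq> 0} \<subseteq> {a - e..b + e} \<times> {p - d..q + d}"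
    using plateau_neq_0_imp[OF ab] plateau_neq_0_imp[OF pq(1,2)] by (auto simp: mem_Times_iff)
  moreover have "bounded ({a - e..b + e} \<times> {p - d..q + d})"
    by (intro bounded_Times bounded_closed_interval)
  ultimately show "compact (closure {x. plateau a b e (fst x) * plateau p q d (snd x) \<noteq> 0})"
    unfolding compact_closure by (rule bounded_subset[rotated])
  have "closure {x. plateau a b e (fst x) * plateau p q d (snd x) \<noteq> 0} \<subseteq> {a - e..b + e} \<times> {p - d..q + d}"
    by (intro closure_minimal support closed_Times closed_atLeastAtMost)
  also have "\<dots> \<subseteq> strip" using pq by (auto simp: strip_def mem_Times_iff)
  finally show "closure {x. plateau a b e (fst x) * plateau p q d (snd x) \<noteq> 0} \<subseteq> strip" .
qed

lemma integrable_strip_bounded_mult: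
  fixes f :: "real \<times> real \<Rightarrow> real \<times> real" and k :: "real \<times> real \<Rightarrow> real"
  assumes f: "L2_strip f" and k: "k \<in> borel_measurable borel" "\<And>x. \<bar>k x\<bar> \<le> C"
    "\<And>x. k x \<noteq> 0 \<Longrightarrow> fst x \<in> {A..B}"
  shows "integrable lborel (\<lambda>x. indicator strip x *\<^sub>R (k x *\<^sub>R f x))"
proof (rule Bochner_Integration.integrable_bound)
  define R where "R = {A..B} \<times> {-1..1::real}"
  have "integrable lborel (indicator R :: real \<times> real \<Rightarrow> real)"
    unfolding R_def
    by (intro integrable_real_indicator emeasure_bounded_finite bounded_Times bounded_closed_interval)
       (simp add: borel_closed closed_Times)
  moreover have "integrable lborel (\<lambda>x. indicator strip x *\<^sub>R (norm (f x))^2)"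
    using f unfolding L2_strip_def set_integrable_def by simp
  ultimately show "integrable lborel (\<lambda>x. C * (indicator R x + indicator strip x *\<^sub>R (norm (f x))^2))"
    by (intro integrable_mult_right Bochner_Integration.integrable_add)
  have "(\<lambda>x. indicator strip x *\<^sub>R f x) \<in> borel_measurable borel"
    using f unfolding L2_strip_def set_borel_measurable_def by simp
  then have "(\<lambda>x. k x *\<^sub>R (indicator strip x *\<^sub>R f x)) \<in> borel_measurable borel"
    by (rule borel_measurable_scaleR[OF k(1)])
  then show "(\<lambda>x. indicator strip x *\<^sub>R (k x *\<^sub>R f x)) \<in> borel_measurable lborel"
    by (simp add: scaleR_left_commute mult.commute)
  have "0 \<le> C" using k(2)[of 0] by linarith
  have "norm (indicator strip x *\<^sub>R (k x *\<^sub>R f x))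
      \<le> norm (C * (indicator R x + indicator strip x *\<^sub>R (norm (f x))^2))" for x
  proof (cases "x \<in> strip \<and> k x \<noteq> 0")
    case True
    then have "x \<in> R" using k(3)[of x] by (auto simp: R_def strip_def mem_Times_iff)
    have "norm (f x) \<le> 1 + (norm (f x))^2"
      using zero_le_power2[of "norm (f x) - 1/2"] by (simp add: power2_eq_square algebra_simps)
    then have "\<bar>k x\<bar> * norm (f x) \<le> C * (1 + (norm (f x))^2)"
      using k(2)[of x] by (intro mult_mono) auto
    then show ?thesis using True \<open>x \<in> R\<close> \<open>0 \<le> C\<close> by simp
  qed (auto split: split_indicator)
  then show "AE x in lborel. norm (indicator strip x *\<^sub>R (k x *\<^sub>R f x))
      \<le> norm (C * (indicator R x + indicator strip x *\<^sub>R (norm (f x))^2))"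
    by simp
qed

lemma borel_measurable_fst_comp:
  "k \<in> borel_measurable borel \<Longrightarrow> (\<lambda>x::real \<times> real. k (fst x)) \<in> borel_measurable borel"
  and borel_measurable_snd_comp:
  "k \<in> borel_measurable borel \<Longrightarrow> (\<lambda>x::real \<times> real. k (snd x)) \<in> borel_measurable borel"
  by (rule measurable_compose[OF borel_measurable_continuous_onI[OF continuous_on_fst[OF continuous_on_id]]];
      assumption)
     (rule measurable_compose[OF borel_measurable_continuous_onI[OF continuous_on_snd[OF continuous_on_id]]])

lemma integrable_strip_tensor:
  assumes f: "L2_strip f"
    and k: "k \<in> borel_measurable borel" "\<And>s. \<bar>k s\<bar> \<le> 1" "\<And>s. k s \<noteq> 0 \<Longrightarrow> s \<in> {A..B}"
    and h: "h \<in> borel_measurable borel" "\<And>s. \<bar>h s\<bar> \<le> C"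
  shows "integrable lborel (\<lambda>x. indicator strip x *\<^sub>R ((k (fst x) * h (snd x)) *\<^sub>R f x))"
proof (rule integrable_strip_bounded_mult[OF f])
  show "(\<lambda>x. k (fst x) * h (snd x)) \<in> borel_measurable borel"
    using borel_measurable_fst_comp[OF k(1)] borel_measurable_snd_comp[OF h(1)] by measurable
  show "\<bar>k (fst x) * h (snd x)\<bar> \<le> 1 * C" for x
    unfolding abs_mult using k(2) h(2) by (intro mult_mono) auto
  show "fst x \<in> {A..B}" if "k (fst x) * h (snd x) \<noteq> 0" for x
    using that k(3) by auto
qed

lemma lborel_pair_Fubini:
  fixes F :: "real \<times> real \<Rightarrow> real"
  assumes "integrable lborel F"
  shows "integral\<^sup>L lborel F = (\<integral>x1. (\<integral>x2. F (x1, x2) \<partial>lborel) \<partial>lborel)"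
    and "integrable lborel (\<lambda>x1. \<integral>x2. F (x1, x2) \<partial>lborel)"
    and "AE x1 in lborel. integrable lborel (\<lambda>x2. F (x1, x2))"
proof -
  have F: "integrable (lborel \<Otimes>\<^sub>M lborel) F" using assms by (simp add: lborel_prod)
  show "integral\<^sup>L lborel F = (\<integral>x1. (\<integral>x2. F (x1, x2) \<partial>lborel) \<partial>lborel)"
    using lborel_pair.integral_fst'[OF F] by (simp add: lborel_prod)
  show "integrable lborel (\<lambda>x1. \<integral>x2. F (x1, x2) \<partial>lborel)"
    using lborel_pair.integrable_fst'[OF F] .
  show "AE x1 in lborel. integrable lborel (\<lambda>x2. F (x1, x2))"
    using lborel_pair.AE_integrable_fst'[OF F] .
qed

lemma L2_strip_Fubini:
  assumes "L2_strip f"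
  shows "(LINT x:strip|lborel. (norm (f x))^2) = (\<integral>x1. (LBINT t:{-1<..<1}. (norm (f (x1, t)))^2) \<partial>lborel)"
    and "integrable lborel (\<lambda>x1. LBINT t:{-1<..<1}. (norm (f (x1, t)))^2)"
proof -
  have f: "integrable lborel (\<lambda>x. indicator strip x *\<^sub>R (norm (f x))^2)"
    using assms unfolding L2_strip_def set_integrable_def by simp
  have slice: "(\<lambda>x1. \<integral>x2. indicator strip (x1, x2) *\<^sub>R (norm (f (x1, x2)))^2 \<partial>lborel)
      = (\<lambda>x1. LBINT t:{-1<..<1}. (norm (f (x1, t)))^2)"
    unfolding set_lebesgue_integral_def indicator_strip_Pair ..
  show "(LINT x:strip|lborel. (norm (f x))^2) = (\<integral>x1. (LBINT t:{-1<..<1}. (norm (f (x1, t)))^2) \<partial>lborel)"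
    using lborel_pair_Fubini(1)[OF f] unfolding slice set_lebesgue_integral_def[of lborel strip] .
  show "integrable lborel (\<lambda>x1. LBINT t:{-1<..<1}. (norm (f (x1, t)))^2)"
    using lborel_pair_Fubini(2)[OF f] unfolding slice .
qed

text \<open>Integrated over the slice \<open>{x1} \<times> (-1, 1)\<close>, \<open>strip_pairing p q d f g\<close> is the defect in the
  weak-derivative identity for the slices \<open>f (x1, \<cdot>)\<close>, \<open>g (x1, \<cdot>)\<close> tested against \<open>plateau p q d\<close>.\<close>

definition strip_pairing ::
  "real \<Rightarrow> real \<Rightarrow> real \<Rightarrow> (real \<times> real \<Rightarrow> real) \<Rightarrow> (real \<times> real \<Rightarrow> real) \<Rightarrow> real \<times> real \<Rightarrow> real" where
  "strip_pairing p q d f g x = indicator strip x * (plateau' p q d (snd x) * f x + plateau p q d (snd x) * g x)"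

lemma borel_measurable_strip_linear:
  fixes c :: "real \<times> real \<Rightarrow> real"
  assumes "bounded_linear c" "L2_strip f"
  shows "(\<lambda>x. indicator strip x * c (f x)) \<in> borel_measurable borel"
proof -
  interpret c: bounded_linear c by fact
  have "(\<lambda>x. indicator strip x *\<^sub>R f x) \<in> borel_measurable borel"
    using assms(2) unfolding L2_strip_def set_borel_measurable_def by simp
  then have "(\<lambda>x. c (indicator strip x *\<^sub>R f x)) \<in> borel_measurable borel"
    by (rule measurable_compose[OF _ borel_measurable_continuous_onI[OF linear_continuous_on[OF assms(1)]]])
  then show ?thesis by (simp add: c.scale)
qed

lemma set_borel_measurable_slice:
  fixes c :: "real \<times> real \<Rightarrow> real"
  assumes c: "bounded_linear c" and f: "L2_strip f"
  shows "set_borel_measurable lborel {-1<..<1} (\<lambda>t. c (f (x1, t)))"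
proof -
  have "(\<lambda>t. indicator strip (x1, t) * c (f (x1, t))) \<in> borel_measurable borel"
    by (rule measurable_compose[OF _ borel_measurable_strip_linear[OF c f]]) simp
  then show ?thesis
    unfolding set_borel_measurable_def indicator_strip_Pair by simp
qed

context
  fixes v d1v d2v :: "real \<times> real \<Rightarrow> real \<times> real"
  assumes H: "H1_strip_zero_trace v d1v d2v"
begin

lemma L2_strip_v: "L2_strip v" and L2_strip_d2v: "L2_strip d2v"
  using H by (auto simp: H1_strip_zero_trace_def)

context
  fixes c :: "real \<times> real \<Rightarrow> real"
  assumes c: "bounded_linear c"
begin

interpretation c: bounded_linear c by (rule c)

lemma strip_pairing_linear:
  "(\<lambda>x. k x * strip_pairing p q d (\<lambda>x. c (v x)) (\<lambda>x. c (d2v x)) x)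
    = (\<lambda>x. c (indicator strip x *\<^sub>R ((k x * plateau' p q d (snd x)) *\<^sub>R v x))
      + c (indicator strip x *\<^sub>R ((k x * plateau p q d (snd x)) *\<^sub>R d2v x)))"
  by (simp add: fun_eq_iff strip_pairing_def c.scale algebra_simps)

lemma integrable_strip_pairing:
  assumes pq: "0 < d" "p \<le> q"
    and k: "k \<in> borel_measurable borel" "\<And>s. \<bar>k s\<bar> \<le> 1" "\<And>s. k s \<noteq> 0 \<Longrightarrow> s \<in> {A..B}"
  shows "integrable lborel (\<lambda>x. k (fst x) * strip_pairing p q d (\<lambda>x. c (v x)) (\<lambda>x. c (d2v x)) x)"
  unfolding strip_pairing_linear
  by (intro Bochner_Integration.integrable_add integrable_bounded_linear[OF c]
      integrable_strip_tensor[OF L2_strip_v k borel_measurable_plateau'[OF pq(1)] abs_plateau'_le[OF pq(1)]]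
      integrable_strip_tensor[OF L2_strip_d2v k borel_measurable_plateau[OF pq(1)] abs_plateau_le_1[OF pq]])

lemma integral_plateau_strip_pairing:
  assumes ab: "0 < e" "a \<le> b" and pq: "0 < d" "p \<le> q" "-1 < p - d" "q + d < 1"
  shows "(\<integral>x. plateau a b e (fst x) * strip_pairing p q d (\<lambda>x. c (v x)) (\<lambda>x. c (d2v x)) x \<partial>lborel) = 0"
proof -
  define k1 where "k1 x = plateau a b e (fst x) * plateau' p q d (snd x)" for x :: "real \<times> real"
  define k2 where "k2 x = plateau a b e (fst x) * plateau p q d (snd x)" for x :: "real \<times> real"
  have support: "s \<in> {a - e..b + e}" if "plateau a b e s \<noteq> 0" for s
    using plateau_neq_0_imp[OF ab that] .
  have v: "integrable lborel (\<lambda>x. indicator strip x *\<^sub>R (k1 x *\<^sub>R v x))"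
    unfolding k1_def
    by (rule integrable_strip_tensor[OF L2_strip_v borel_measurable_plateau[OF ab(1)] abs_plateau_le_1[OF ab]
          support borel_measurable_plateau'[OF pq(1)] abs_plateau'_le[OF pq(1)]])
  have d2v: "integrable lborel (\<lambda>x. indicator strip x *\<^sub>R (k2 x *\<^sub>R d2v x))"
    unfolding k2_def
    by (rule integrable_strip_tensor[OF L2_strip_d2v borel_measurable_plateau[OF ab(1)] abs_plateau_le_1[OF ab]
          support borel_measurable_plateau[OF pq(1)] abs_plateau_le_1[OF pq(1,2)]])
  have "(LINT x:strip|lborel. k1 x *\<^sub>R v x) = - (LINT x:strip|lborel. k2 x *\<^sub>R d2v x)"
    using H test_fun_strip_plateau_tensor[OF ab pq]
    unfolding H1_strip_zero_trace_def weak_d2_def k1_def k2_def by blast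
  then have "c (LINT x:strip|lborel. k1 x *\<^sub>R v x) + c (LINT x:strip|lborel. k2 x *\<^sub>R d2v x) = 0"
    by (simp add: c.neg)
  moreover have "(\<integral>x. plateau a b e (fst x) * strip_pairing p q d (\<lambda>x. c (v x)) (\<lambda>x. c (d2v x)) x \<partial>lborel)
      = (\<integral>x. c (indicator strip x *\<^sub>R (k1 x *\<^sub>R v x)) + c (indicator strip x *\<^sub>R (k2 x *\<^sub>R d2v x)) \<partial>lborel)"
    by (simp only: strip_pairing_linear k1_def k2_def)
  moreover have "\<dots> = c (LINT x:strip|lborel. k1 x *\<^sub>R v x) + c (LINT x:strip|lborel. k2 x *\<^sub>R d2v x)"
    unfolding set_lebesgue_integral_def
    by (simp only: Bochner_Integration.integral_add[OF integrable_bounded_linear[OF c v]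
          integrable_bounded_linear[OF c d2v]] integral_bounded_linear[OF c v] integral_bounded_linear[OF c d2v])
  ultimately show ?thesis by simp
qed

lemma AE_slice_strip_pairing_eq_0:
  assumes pq: "0 < d" "p \<le> q" "-1 < p - d" "q + d < 1"
  shows "AE x1 in lborel. (\<integral>x2. strip_pairing p q d (\<lambda>x. c (v x)) (\<lambda>x. c (d2v x)) (x1, x2) \<partial>lborel) = 0"
proof -
  define S where "S = strip_pairing p q d (\<lambda>x. c (v x)) (\<lambda>x. c (d2v x))"
  define G where "G x1 = (\<integral>x2. S (x1, x2) \<partial>lborel)" for x1
  have S_eq: "S = (\<lambda>x. plateau' p q d (snd x) * (indicator strip x * c (v x))
      + plateau p q d (snd x) * (indicator strip x * c (d2v x)))"
    by (simp add: S_def strip_pairing_def fun_eq_iff algebra_simps)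
  have "S \<in> borel_measurable borel"
    unfolding S_eq using borel_measurable_strip_linear[OF c L2_strip_v] borel_measurable_strip_linear[OF c L2_strip_d2v]
      borel_measurable_snd_comp[OF borel_measurable_plateau[OF pq(1)]]
      borel_measurable_snd_comp[OF borel_measurable_plateau'[OF pq(1)]]
    by measurable
  then have "(\<lambda>(x1, x2). S (x1, x2)) \<in> borel_measurable (lborel \<Otimes>\<^sub>M lborel)"
    by (simp add: lborel_prod)
  then have "(\<lambda>x1. \<integral>x2. S (x1, x2) \<partial>lborel) \<in> borel_measurable lborel"
    by (rule sigma_finite_measure.borel_measurable_lebesgue_integral[OF sigma_finite_lborel])
  then have G_meas: "G \<in> borel_measurable borel" unfolding G_def by simp
  have Fubini: "integrable lborel (\<lambda>x1. k x1 * G x1)"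
      "(\<integral>x1. k x1 * G x1 \<partial>lborel) = (\<integral>x. k (fst x) * S x \<partial>lborel)"
    if "k \<in> borel_measurable borel" "\<And>s. \<bar>k s\<bar> \<le> 1" "\<And>s. k s \<noteq> 0 \<Longrightarrow> s \<in> {A..B}" for k A B
  proof -
    have "(\<lambda>x1. \<integral>x2. k (fst (x1, x2)) * S (x1, x2) \<partial>lborel) = (\<lambda>x1. k x1 * G x1)"
      unfolding G_def by simp
    then show "integrable lborel (\<lambda>x1. k x1 * G x1)"
        "(\<integral>x1. k x1 * G x1 \<partial>lborel) = (\<integral>x. k (fst x) * S x \<partial>lborel)"
      using lborel_pair_Fubini(1,2)[OF integrable_strip_pairing[OF pq(1,2) that]]
      unfolding S_def by metis+
  qed
  have G_integrable: "set_integrable lborel {a..b} G" for a b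
  proof -
    have "integrable lborel (\<lambda>x1. indicator {a..b} x1 * G x1)"
      by (rule Fubini(1)[of "indicator {a..b}" a b]) (auto simp: indicator_def)
    then show ?thesis unfolding set_integrable_def by simp
  qed
  have "(\<integral>x1. plateau a b e x1 * G x1 \<partial>lborel) = 0" if "a \<le> b" "0 < e" "e \<le> 1" for a b e
  proof -
    have support: "s \<in> {a - 1..b + 1}" if "plateau a b e s \<noteq> 0" for s
      using plateau_neq_0_imp[OF \<open>0 < e\<close> \<open>a \<le> b\<close> that] \<open>e \<le> 1\<close> by auto
    show ?thesis
      using Fubini(2)[OF borel_measurable_plateau[OF \<open>0 < e\<close>] abs_plateau_le_1[OF \<open>0 < e\<close> \<open>a \<le> b\<close>] support]
        integral_plateau_strip_pairing[OF \<open>0 < e\<close> \<open>a \<le> b\<close> pq]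
      unfolding S_def by simp
  qed
  then have "AE x1 in lborel. G x1 = 0"
    by (intro AE_zero_of_plateau_integrals_zero G_meas G_integrable)
  then show ?thesis unfolding G_def S_def .
qed

lemma AE_slice_square_integrable:
  "AE x1 in lborel. set_integrable lborel {-1<..<1} (\<lambda>t. (c (d2v (x1, t)))^2)"
proof -
  obtain K where K: "\<And>z. norm (c z) \<le> norm z * K" using c.bounded by blast
  define W where "W x = indicator strip x * c (d2v x)" for x
  have "integrable lborel (\<lambda>x. (W x)^2)"
  proof (rule Bochner_Integration.integrable_bound)
    show "integrable lborel (\<lambda>x. K^2 * (indicator strip x *\<^sub>R (norm (d2v x))^2))"
      using L2_strip_d2v unfolding L2_strip_def set_integrable_def by simp
    show "(\<lambda>x. (W x)^2) \<in> borel_measurable lborel"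
      using borel_measurable_strip_linear[OF c L2_strip_d2v] unfolding W_def by simp
    have "(c (d2v x))^2 \<le> K^2 * (norm (d2v x))^2" for x
      using K[of "d2v x"] by (metis abs_ge_zero power2_abs power_mono power_mult_distrib mult.commute real_norm_def)
    then show "AE x in lborel. norm ((W x)^2) \<le> norm (K^2 * (indicator strip x *\<^sub>R (norm (d2v x))^2))"
      by (intro AE_I2) (auto simp: W_def split: split_indicator)
  qed
  then have "AE x1 in lborel. integrable lborel (\<lambda>x2. (W (x1, x2))^2)"
    by (rule lborel_pair_Fubini(3))
  moreover have "(\<lambda>x2. (W (x1, x2))^2) = (\<lambda>t. indicator {-1<..<1} t *\<^sub>R (c (d2v (x1, t)))^2)" for x1
    by (auto simp: W_def indicator_strip_Pair power2_eq_square split: split_indicator)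
  ultimately show ?thesis
    unfolding set_integrable_def by simp
qed

lemma AE_slice_plateau_weak_deriv:
  "AE x1 in lborel. plateau_weak_deriv (\<lambda>t. c (v (x1, t))) (\<lambda>t. c (d2v (x1, t)))"
proof -
  have "AE x1 in lborel. \<forall>p\<in>\<rat>. \<forall>q\<in>\<rat>. \<forall>d\<in>\<rat>. 0 < d \<and> p \<le> q \<and> -1 < p - d \<and> q + d < 1 \<longrightarrow>
      (\<integral>x2. strip_pairing p q d (\<lambda>x. c (v x)) (\<lambda>x. c (d2v x)) (x1, x2) \<partial>lborel) = 0"
    using AE_slice_strip_pairing_eq_0 by (simp add: AE_ball_countable countable_rat)
  moreover have "AE x1 in lborel. continuous_on {-1..1} (\<lambda>t. v (x1, t))"
    using H unfolding H1_strip_zero_trace_def by auto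
  ultimately show ?thesis
    using AE_slice_square_integrable
  proof eventually_elim
    case (elim x1)
    define u where "u t = c (v (x1, t))" for t
    define w where "w t = c (d2v (x1, t))" for t
    have u: "continuous_on {-1..1} u"
      unfolding u_def using elim(2) by (intro continuous_on_compose2[OF linear_continuous_on[OF c]]) auto
    have w_meas: "set_borel_measurable lborel {-1<..<1} w"
      unfolding w_def by (rule set_borel_measurable_slice[OF c L2_strip_d2v])
    have w: "set_integrable lborel {-1<..<1} w"
      by (rule set_integrable_of_square[OF w_meas, of "-1" 1]) (use elim(3) in \<open>auto simp: w_def\<close>)
    show ?case unfolding plateau_weak_deriv_def u_def[symmetric] w_def[symmetric]
    proof (intro ballI impI)
      fix p q d :: real assume pqd: "p \<in> \<rat>" "q \<in> \<rat>" "d \<in> \<rat>" "0 < d \<and> p \<le> q \<and> -1 < p - d \<and> q + d < 1"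
      then have pq: "0 < d" "p \<le> q" by auto
      have "set_integrable lborel {-1..1} (\<lambda>t. plateau' p q d t * u t)"
        by (intro borel_integrable_atLeastAtMost' continuous_on_mult continuous_on_plateau' pq u)
      then have i1: "set_integrable lborel {-1<..<1} (\<lambda>t. plateau' p q d t * u t)"
        by (rule set_integrable_subset) auto
      have i2: "set_integrable lborel {-1<..<1} (\<lambda>t. plateau p q d t * w t)"
      proof (rule set_integrable_bound[OF w])
        show "set_borel_measurable lborel {-1<..<1} (\<lambda>t. plateau p q d t * w t)"
          using w_meas borel_measurable_plateau[OF pq(1)] unfolding set_borel_measurable_def
          by (simp add: mult.left_commute)
        show "AE t in lborel. t \<in> {-1<..<1} \<longrightarrow> norm (plateau p q d t * w t) \<le> norm (w t)"
          using abs_plateau_le_1[OF pq] by (intro AE_I2) (simp add: abs_mult mult_left_le_one_le)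
      qed
      have "(\<integral>x2. strip_pairing p q d (\<lambda>x. c (v x)) (\<lambda>x. c (d2v x)) (x1, x2) \<partial>lborel)
          = (LBINT t:{-1<..<1}. plateau' p q d t * u t + plateau p q d t * w t)"
        unfolding set_lebesgue_integral_def by (simp add: strip_pairing_def indicator_strip_Pair u_def w_def)
      also have "\<dots> = (LBINT t:{-1<..<1}. plateau' p q d t * u t) + (LBINT t:{-1<..<1}. plateau p q d t * w t)"
        by (rule set_integral_add(2)[OF i1 i2])
      finally show "(LBINT t:{-1<..<1}. plateau' p q d t * u t) = - (LBINT t:{-1<..<1}. plateau p q d t * w t)"
        using elim(1) pqd by simp
    qed
  qed
qed

lemma AE_slice_sq_le:
  "AE x1 in lborel. (\<forall>t\<in>{-1..1}. (c (v (x1, t)))^2 \<le> 2 * (LBINT t:{-1<..<1}. (c (d2v (x1, t)))^2))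
      \<and> 2 * (c (v (x1, 0)))^2 \<le> (LBINT t:{-1<..<1}. (c (d2v (x1, t)))^2)"
proof -
  have "AE x1 in lborel. continuous_on {-1..1} (\<lambda>t. v (x1, t)) \<and> v (x1, -1) = 0 \<and> v (x1, 1) = 0"
    using H unfolding H1_strip_zero_trace_def by auto
  with AE_slice_square_integrable AE_slice_plateau_weak_deriv show ?thesis
  proof eventually_elim
    case (elim x1)
    have u: "continuous_on {-1..1} (\<lambda>t. c (v (x1, t)))"
      using elim(3) by (intro continuous_on_compose2[OF linear_continuous_on[OF c]]) auto
    note bounds = plateau_weak_deriv_sq_le[OF u _ _ set_borel_measurable_slice[OF c L2_strip_d2v] elim(1,2)]
      plateau_weak_deriv_center_sq_le[OF u _ _ set_borel_measurable_slice[OF c L2_strip_d2v] elim(1,2)]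
    show ?case using bounds elim(3) by (simp add: c.zero)
  qed
qed

end

lemma AE_slice_energy_bounds:
  "AE x1 in lborel.
      (LBINT t:{-1<..<1}. (norm (v (x1, t)))^2) \<le> 4 * (LBINT t:{-1<..<1}. (norm (d2v (x1, t)))^2)
    \<and> (snd (v (x1, 0)))^2 \<le> (LBINT t:{-1<..<1}. (norm (d2v (x1, t)))^2) / 2"
proof -
  have "AE x1 in lborel. continuous_on {-1..1} (\<lambda>t. v (x1, t))"
    using H unfolding H1_strip_zero_trace_def by auto
  with AE_slice_sq_le[OF bounded_linear_fst] AE_slice_sq_le[OF bounded_linear_snd]
    AE_slice_square_integrable[OF bounded_linear_fst] AE_slice_square_integrable[OF bounded_linear_snd]
  show ?thesis
  proof eventually_elim
    case (elim x1)
    have norm_sq: "(norm z)^2 = (fst z)^2 + (snd z)^2" for z :: "real \<times> real"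
      by (simp add: norm_prod_def)
    define J1 where "J1 = (LBINT t:{-1<..<1}. (fst (d2v (x1, t)))^2)"
    define J2 where "J2 = (LBINT t:{-1<..<1}. (snd (d2v (x1, t)))^2)"
    have J: "(LBINT t:{-1<..<1}. (norm (d2v (x1, t)))^2) = J1 + J2"
      unfolding norm_sq J1_def J2_def by (rule set_integral_add(2)[OF elim(3,4)])
    have "(LBINT t:{-1<..<1}. (norm (v (x1, t)))^2) \<le> (LBINT t:{-1<..<1::real}. 2 * (J1 + J2))"
    proof (rule set_integral_mono)
      have "set_integrable lborel {-1..1} (\<lambda>t. (norm (v (x1, t)))^2)"
        using elim(5) by (intro borel_integrable_atLeastAtMost' continuous_intros) auto
      then show "set_integrable lborel {-1<..<1} (\<lambda>t. (norm (v (x1, t)))^2)"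
        by (rule set_integrable_subset) auto
      have "set_integrable lborel {-1..1::real} (\<lambda>t. 2 * (J1 + J2))"
        by (rule borel_integrable_atLeastAtMost') simp
      then show "set_integrable lborel {-1<..<1::real} (\<lambda>t. 2 * (J1 + J2))"
        by (rule set_integrable_subset) auto
      show "(norm (v (x1, t)))^2 \<le> 2 * (J1 + J2)" if "t \<in> {-1<..<1}" for t
      proof -
        have "t \<in> {-1..1}" using that by auto
        with elim(1,2) have "(fst (v (x1, t)))^2 \<le> 2 * J1" "(snd (v (x1, t)))^2 \<le> 2 * J2"
          unfolding J1_def J2_def by blast+
        then show ?thesis unfolding norm_sq by simp
      qed
    qed
    also have "\<dots> = 4 * (J1 + J2)" by (simp add: set_integral_const)
    moreover have "0 \<le> J1" unfolding J1_def by (rule set_integral_nonneg) simp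
    ultimately show ?case
      using elim(2) unfolding J J2_def by simp
  qed
qed

lemma strip_L2_le_d2_energy:
  "(LINT x:strip|lborel. (norm (v x))^2) \<le> 4 * (LINT x:strip|lborel. (norm (d2v x))^2)"
proof -
  have "(\<integral>x1. (LBINT t:{-1<..<1}. (norm (v (x1, t)))^2) \<partial>lborel)
      \<le> (\<integral>x1. 4 * (LBINT t:{-1<..<1}. (norm (d2v (x1, t)))^2) \<partial>lborel)"
    using AE_slice_energy_bounds
    by (intro integral_mono_AE L2_strip_Fubini(2)[OF L2_strip_v] integrable_mult_right L2_strip_Fubini(2)[OF L2_strip_d2v])
       (auto elim: eventually_mono)
  then show ?thesis by (simp add: L2_strip_Fubini(1)[OF L2_strip_v] L2_strip_Fubini(1)[OF L2_strip_d2v])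
qed

lemma trace_le_d2_energy:
  "(LINT x1|lborel. (snd (v (x1, 0)))^2) \<le> (LINT x:strip|lborel. (norm (d2v x))^2) / 2"
proof (cases "integrable lborel (\<lambda>x1. (snd (v (x1, 0)))^2)")
  case True
  have "(LINT x1|lborel. (snd (v (x1, 0)))^2) \<le> (\<integral>x1. (LBINT t:{-1<..<1}. (norm (d2v (x1, t)))^2) / 2 \<partial>lborel)"
    using AE_slice_energy_bounds
    by (intro integral_mono_AE True integrable_divide L2_strip_Fubini(2)[OF L2_strip_d2v]) (auto elim: eventually_mono)
  then show ?thesis by (simp add: L2_strip_Fubini(1)[OF L2_strip_d2v])
next
  case False
  then show ?thesis
    by (simp add: not_integrable_integral_eq set_integral_nonneg)
qed

end

theorem lemma3p10:
  fixes g rho :: real and B :: "'b::real_normed_vector"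
  assumes "g > 0" and "rho > 0" and "norm B > Bc g rho"
  shows "\<exists>C>0. \<forall>v d1v d2v. H1_strip_zero_trace v d1v d2v \<longrightarrow>
     (LINT x:strip|lborel. (norm B)^2 * (norm (d2v x))^2)
       - (LINT x1|lborel. g * rho * (snd (v (x1, 0)))^2)
     \<ge> (1 / C) * ((LINT x:strip|lborel. (norm (v x))^2) + (LINT x:strip|lborel. (norm (d2v x))^2))"
proof -
  define \<kappa> where "\<kappa> = (norm B)^2 - g * rho / 2"
  have "0 < \<kappa>" unfolding \<kappa>_def using Bc_less_imp_sq_gt[OF assms] by simp
  show ?thesis
  proof (intro exI[of _ "5 / \<kappa>"] conjI allI impI)
    show "0 < 5 / \<kappa>" using \<open>0 < \<kappa>\<close> by simp
    fix v d1v d2v :: "real \<times> real \<Rightarrow> real \<times> real"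
    assume H: "H1_strip_zero_trace v d1v d2v"
    define E where "E = (LINT x:strip|lborel. (norm (d2v x))^2)"
    define T where "T = (LINT x1|lborel. (snd (v (x1, 0)))^2)"
    have "1 / (5 / \<kappa>) * ((LINT x:strip|lborel. (norm (v x))^2) + E) \<le> \<kappa> / 5 * (5 * E)"
      using strip_L2_le_d2_energy[OF H] \<open>0 < \<kappa>\<close> unfolding E_def by (simp add: mult_left_mono)
    also have "\<dots> = (norm B)^2 * E - g * rho * (E / 2)"
      unfolding \<kappa>_def by (simp add: field_simps)
    also have "\<dots> \<le> (norm B)^2 * E - g * rho * T"
      using trace_le_d2_energy[OF H] assms(1,2) unfolding E_def T_def by simp
    finally show "(LINT x:strip|lborel. (norm B)^2 * (norm (d2v x))^2)
        - (LINT x1|lborel. g * rho * (snd (v (x1, 0)))^2)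
      \<ge> (1 / (5 / \<kappa>)) * ((LINT x:strip|lborel. (norm (v x))^2) + (LINT x:strip|lborel. (norm (d2v x))^2))"
      unfolding E_def T_def by simp
  qed
qed

end
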